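(* Let $T>0$, let $f,h,g:[0,T]\to\mathbb{R}$ be continuous with $g$ not identically zero, and let $\mathbf{m},x_0,x_T\in\mathbb{R}^d$. For a control $\mathbf{u}:[0,T]\to\mathbb{R}^d$ let $\mathbf{x}^u$ solve $\frac{d\mathbf{x}_t}{dt}=f_t\mathbf{x}_t+h_t\mathbf{m}+g_t\mathbf{u}_t$, $\mathbf{x}^u_0=x_0$, and for $\gamma\in(0,\infty)$ let $$\mathcal{J}(\mathbf{u},\gamma)=\int_0^T\tfrac12\|\mathbf{u}_t\|_2^2\,dt+\tfrac\gamma2\|\mathbf{x}^u_T-x_T\|_2^2 .$$ Let $\mathbf{u}^*_{\cdot,\gamma}$ be the optimal control minimizing $\mathcal{J}(\cdot,\gamma)$, and let $\mathbf{u}^*_{t,\infty}=\lim_{\gamma\to\infty}\mathbf{u}^*_{t,\gamma}$ (for each $t$), and define $$\mathcal{J}(\mathbf{u}^*_{\cdot,\infty},\infty)=\int_0^T\tfrac12\|\mathbf{u}^*_{t,\infty}\|_2^2\,dt+\lim_{\gamma\to\infty}\tfrac\gamma2\|\mathbf{x}^{u^*_{\gamma}}_T-x_T\|_2^2 .$$ Then for every $\gamma\in(0,\infty)$, $$\mathcal{J}(\mathbf{u}^*_{\cdot,\gamma},\gamma)\le\mathcal{J}(\mathbf{u}^*_{\cdot,\infty},\infty).$$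
   Context: Notation: $\bar f_t=\int_0^t f_z\,dz$, $\bar h_T=\int_0^T e^{-\bar f_z}h_z\,dz$, $\bar g^2_T=\int_0^T e^{-2\bar f_z}g_z^2\,dz$, $a=e^{\bar f_T}x_0+\mathbf{m}e^{\bar f_T}\bar h_T-x_T$. Explicitly the optimal control is $\mathbf{u}^*_{t,\gamma}=-g_te^{\bar f_T-\bar f_t}\,a/(\gamma^{-1}+e^{2\bar f_T}\bar g^2_T)$, so $\mathbf{u}^*_{t,\infty}=-g_te^{\bar f_T-\bar f_t}\,a/(e^{2\bar f_T}\bar g^2_T)$, which steers $x_0$ exactly to $x_T$; the limit term in $\mathcal{J}(\mathbf{u}^*_{\cdot,\infty},\infty)$ equals $0$. *)

theory Defs
  imports "HOL-Analysis.Analysis"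
begin

definition admissible :: "real \<Rightarrow> (real \<Rightarrow> real^'d) \<Rightarrow> bool" where
  "admissible T u \<longleftrightarrow> continuous_on {0..T} u"

definition solves_state ::
  "real \<Rightarrow> (real \<Rightarrow> real) \<Rightarrow> (real \<Rightarrow> real) \<Rightarrow> (real \<Rightarrow> real) \<Rightarrow> real^'d \<Rightarrow> real^'d
    \<Rightarrow> (real \<Rightarrow> real^'d) \<Rightarrow> (real \<Rightarrow> real^'d) \<Rightarrow> bool" where
  "solves_state T f h g m x0 u x \<longleftrightarrow>
     x 0 = x0 \<and>
     (\<forall>t\<in>{0..T}. (x has_vector_derivative (f t *\<^sub>R x t + h t *\<^sub>R m + g t *\<^sub>R u t)) (at t within {0..T}))"

text \<open>Terminal state x^u_T (the solution is unique on [0,T]).\<close>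
definition terminal_state ::
  "real \<Rightarrow> (real \<Rightarrow> real) \<Rightarrow> (real \<Rightarrow> real) \<Rightarrow> (real \<Rightarrow> real) \<Rightarrow> real^'d \<Rightarrow> real^'d
    \<Rightarrow> (real \<Rightarrow> real^'d) \<Rightarrow> real^'d" where
  "terminal_state T f h g m x0 u = (THE y. \<exists>x. solves_state T f h g m x0 u x \<and> x T = y)"

definition cost ::
  "real \<Rightarrow> (real \<Rightarrow> real) \<Rightarrow> (real \<Rightarrow> real) \<Rightarrow> (real \<Rightarrow> real) \<Rightarrow> real^'d \<Rightarrow> real^'d \<Rightarrow> real^'d
    \<Rightarrow> (real \<Rightarrow> real^'d) \<Rightarrow> real \<Rightarrow> real" where
  "cost T f h g m x0 xT u \<gamma> =
     integral {0..T} (\<lambda>t. 1/2 * (norm (u t))\<^sup>2)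
     + \<gamma> / 2 * (norm (terminal_state T f h g m x0 u - xT))\<^sup>2"

definition optimal_control ::
  "real \<Rightarrow> (real \<Rightarrow> real) \<Rightarrow> (real \<Rightarrow> real) \<Rightarrow> (real \<Rightarrow> real) \<Rightarrow> real^'d \<Rightarrow> real^'d \<Rightarrow> real^'d
    \<Rightarrow> real \<Rightarrow> (real \<Rightarrow> real^'d) \<Rightarrow> bool" where
  "optimal_control T f h g m x0 xT \<gamma> u \<longleftrightarrow>
     admissible T u \<and>
     (\<forall>v. admissible T v \<longrightarrow> cost T f h g m x0 xT u \<gamma> \<le> cost T f h g m x0 xT v \<gamma>)"

end

theory Submission
  imports Defs
begin

(*
  With F = integral of f, variation of constants makes the terminal state affine in the
  control: x_T = x_T^0 + integral of k_s u_s, where k_s = exp (F_T - F_s) g_s and x_T^0 is the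
  terminal state of the uncontrolled system. With a = x_T^0 - x_T and K = integral of k^2 > 0,
  the cost is the quadratic functional integral |u|^2/2 + gamma/2 |a + integral k u|^2.
  Completing the square around u_gamma = - k a / (1/gamma + K) gives
  J (u_gamma + w) = J u_gamma + integral |w|^2/2 + gamma/2 |integral k w|^2, so u_gamma is the
  unique continuous minimiser. As gamma goes to infinity, u_gamma tends pointwise to
  u_inf = - k a / K, the terminal penalty of u_gamma equals (1/gamma) |a|^2 / (2 (1/gamma + K)^2)
  and tends to 0, and u_inf hits x_T exactly, so J (u_gamma, gamma) <= J (u_inf, gamma) is just
  the energy of u_inf.
*)

lemma solves_state_variation_of_constants:
  fixes f h g :: "real \<Rightarrow> real" and m x0 :: "real^'d" and v :: "real \<Rightarrow> real^'d"
  assumes cf: "continuous_on {0..T} f" and ch: "continuous_on {0..T} h"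
    and cg: "continuous_on {0..T} g" and cv: "continuous_on {0..T} v"
  shows "solves_state T f h g m x0 v (\<lambda>t. exp (integral {0..t} f) *\<^sub>R
           (x0 + integral {0..t} (\<lambda>s. exp (- integral {0..s} f) *\<^sub>R (h s *\<^sub>R m + g s *\<^sub>R v s))))"
    (is "solves_state T f h g m x0 v ?x")
proof -
  define F where "F t = integral {0..t} f" for t
  define G where "G t = integral {0..t} (\<lambda>s. exp (- F s) *\<^sub>R (h s *\<^sub>R m + g s *\<^sub>R v s))" for t
  have cF: "continuous_on {0..T} F"
    unfolding F_def by (rule indefinite_integral_continuous_1[OF integrable_continuous_real[OF cf]])
  have "(?x has_vector_derivative (f t *\<^sub>R ?x t + h t *\<^sub>R m + g t *\<^sub>R v t)) (at t within {0..T})"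
    if t: "t \<in> {0..T}" for t
  proof -
    have "(F has_real_derivative f t) (at t within {0..T})"
      unfolding F_def by (rule integral_has_real_derivative[OF cf t])
    then have dexp: "((\<lambda>t. exp (F t)) has_real_derivative exp (F t) * f t) (at t within {0..T})"
      by (rule DERIV_chain2[OF DERIV_exp])
    have "continuous_on {0..T} (\<lambda>s. exp (- F s) *\<^sub>R (h s *\<^sub>R m + g s *\<^sub>R v s))"
      by (intro continuous_intros cF ch cg cv)
    then have dG: "(G has_vector_derivative exp (- F t) *\<^sub>R (h t *\<^sub>R m + g t *\<^sub>R v t)) (at t within {0..T})"
      unfolding G_def using integral_has_vector_derivative t by blast
    have "((\<lambda>t. exp (F t) *\<^sub>R (x0 + G t)) has_vector_derivative
        exp (F t) *\<^sub>R exp (- F t) *\<^sub>R (h t *\<^sub>R m + g t *\<^sub>R v t) + (exp (F t) * f t) *\<^sub>R (x0 + G t))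
        (at t within {0..T})"
      using has_vector_derivative_scaleR[OF dexp has_vector_derivative_add[OF has_vector_derivative_const dG]]
      by simp
    moreover have "exp (F t) *\<^sub>R exp (- F t) *\<^sub>R (h t *\<^sub>R m + g t *\<^sub>R v t) + (exp (F t) * f t) *\<^sub>R (x0 + G t)
        = f t *\<^sub>R (exp (F t) *\<^sub>R (x0 + G t)) + h t *\<^sub>R m + g t *\<^sub>R v t"
      by (simp add: exp_minus field_simps)
    ultimately show ?thesis
      unfolding F_def G_def by simp
  qed
  then show ?thesis
    unfolding solves_state_def by simp
qed

lemma solves_state_unique:
  fixes f h g :: "real \<Rightarrow> real" and m x0 :: "real^'d" and v x y :: "real \<Rightarrow> real^'d"
  assumes cf: "continuous_on {0..T} f"
    and x: "solves_state T f h g m x0 v x" and y: "solves_state T f h g m x0 v y"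
    and t: "t \<in> {0..T}"
  shows "x t = y t"
proof -
  define F where "F t = integral {0..t} f" for t
  define z where "z t = exp (- F t) *\<^sub>R (x t - y t)" for t
  have "(z has_vector_derivative 0) (at s within {0..T})" if s: "s \<in> {0..T}" for s
  proof -
    have "(F has_real_derivative f s) (at s within {0..T})"
      unfolding F_def by (rule integral_has_real_derivative[OF cf s])
    then have dexp: "((\<lambda>t. exp (- F t)) has_real_derivative exp (- F s) * - f s) (at s within {0..T})"
      by (rule DERIV_chain2[OF DERIV_exp DERIV_minus])
    have "((\<lambda>t. x t - y t) has_vector_derivative f s *\<^sub>R (x s - y s)) (at s within {0..T})"
      using has_vector_derivative_diff[of x _ _ y] x y s
      unfolding solves_state_def by (fastforce simp: algebra_simps)
    from has_vector_derivative_scaleR[OF dexp this]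
    show ?thesis
      unfolding z_def by (simp add: algebra_simps)
  qed
  then obtain c where "\<And>s. s \<in> {0..T} \<Longrightarrow> z s = c"
    using has_vector_derivative_zero_constant[of "{0..T}" z] by auto
  moreover have "z 0 = 0"
    using x y unfolding solves_state_def z_def by simp
  ultimately have "z t = 0"
    using t by force
  then show ?thesis
    unfolding z_def by simp
qed

definition terminal_kernel :: "real \<Rightarrow> (real \<Rightarrow> real) \<Rightarrow> (real \<Rightarrow> real) \<Rightarrow> real \<Rightarrow> real" where
  "terminal_kernel T f g s = exp (integral {0..T} f - integral {0..s} f) * g s"

lemma continuous_on_terminal_kernel:
  assumes "continuous_on {0..T} f" and "continuous_on {0..T} g"
  shows "continuous_on {0..T} (terminal_kernel T f g)"
proof -
  have "continuous_on {0..T} (\<lambda>s. integral {0..s} f)"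
    by (rule indefinite_integral_continuous_1[OF integrable_continuous_real[OF assms(1)]])
  then show ?thesis
    unfolding terminal_kernel_def by (intro continuous_intros assms(2))
qed

lemma terminal_state_eq:
  fixes f h g :: "real \<Rightarrow> real" and m x0 :: "real^'d" and v :: "real \<Rightarrow> real^'d"
  assumes "0 \<le> T" and "continuous_on {0..T} f" and "continuous_on {0..T} h"
    and "continuous_on {0..T} g" and "continuous_on {0..T} v"
  shows "terminal_state T f h g m x0 v = exp (integral {0..T} f) *\<^sub>R
           (x0 + integral {0..T} (\<lambda>s. exp (- integral {0..s} f) *\<^sub>R (h s *\<^sub>R m + g s *\<^sub>R v s)))"
proof -
  let ?x = "\<lambda>t. exp (integral {0..t} f) *\<^sub>R
           (x0 + integral {0..t} (\<lambda>s. exp (- integral {0..s} f) *\<^sub>R (h s *\<^sub>R m + g s *\<^sub>R v s)))"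
  have sol: "solves_state T f h g m x0 v ?x"
    by (rule solves_state_variation_of_constants[OF assms(2-5)])
  have "x T = ?x T" if "solves_state T f h g m x0 v x" for x
    using solves_state_unique[OF assms(2) that sol] assms(1) by simp
  then show ?thesis
    unfolding terminal_state_def using sol by blast
qed

lemma terminal_state_affine:
  fixes f h g :: "real \<Rightarrow> real" and m x0 :: "real^'d" and v :: "real \<Rightarrow> real^'d"
  assumes T: "0 \<le> T" and cf: "continuous_on {0..T} f" and ch: "continuous_on {0..T} h"
    and cg: "continuous_on {0..T} g" and cv: "continuous_on {0..T} v"
  shows "terminal_state T f h g m x0 v =
           terminal_state T f h g m x0 (\<lambda>_. 0) + integral {0..T} (\<lambda>s. terminal_kernel T f g s *\<^sub>R v s)"
proof -
  define F where "F t = integral {0..t} f" for t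
  have cF: "continuous_on {0..T} F"
    unfolding F_def by (rule indefinite_integral_continuous_1[OF integrable_continuous_real[OF cf]])
  have "integral {0..T} (\<lambda>s. exp (- F s) *\<^sub>R (h s *\<^sub>R m + g s *\<^sub>R v s))
      = integral {0..T} (\<lambda>s. exp (- F s) *\<^sub>R h s *\<^sub>R m) + integral {0..T} (\<lambda>s. exp (- F s) *\<^sub>R g s *\<^sub>R v s)"
    unfolding scaleR_add_right
    by (intro integral_add integrable_continuous_real continuous_intros cF ch cg cv)
  moreover have "exp (F T) *\<^sub>R integral {0..T} (\<lambda>s. exp (- F s) *\<^sub>R g s *\<^sub>R v s)
      = integral {0..T} (\<lambda>s. terminal_kernel T f g s *\<^sub>R v s)"
    unfolding integral_cmul[symmetric] terminal_kernel_def F_def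
    by (simp add: exp_diff exp_minus divide_inverse ac_simps)
  ultimately show ?thesis
    using terminal_state_eq[OF assms] terminal_state_eq[OF T cf ch cg continuous_on_const, of m x0]
    unfolding F_def by (simp add: scaleR_add_right add.assoc)
qed

definition gramian :: "real \<Rightarrow> (real \<Rightarrow> real) \<Rightarrow> real" where
  "gramian T k = integral {0..T} (\<lambda>s. (k s)\<^sup>2)"

lemma gramian_nonneg: "continuous_on {0..T} k \<Longrightarrow> 0 \<le> gramian T k"
  unfolding gramian_def
  by (intro integral_nonneg integrable_continuous_real continuous_intros) auto

lemma gramian_pos:
  assumes "0 < T" and "continuous_on {0..T} k" and "t \<in> {0..T}" and "k t \<noteq> 0"
  shows "0 < gramian T k"
proof -
  have "gramian T k \<noteq> 0"
    using integral_eq_0_iff[of 0 T "\<lambda>s. (k s)\<^sup>2"] assms unfolding gramian_def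
    by (auto simp: continuous_intros)
  with gramian_nonneg[OF assms(2)] show ?thesis
    by simp
qed

definition control_cost :: "real \<Rightarrow> (real \<Rightarrow> real) \<Rightarrow> 'a::euclidean_space \<Rightarrow> real \<Rightarrow> (real \<Rightarrow> 'a) \<Rightarrow> real" where
  "control_cost T k a \<gamma> v =
     integral {0..T} (\<lambda>t. 1/2 * (norm (v t))\<^sup>2) + \<gamma> / 2 * (norm (a + integral {0..T} (\<lambda>s. k s *\<^sub>R v s)))\<^sup>2"

(* The parameter is epsilon = 1/gamma; epsilon = 0 gives the control that steers exactly. *)
definition regularized_control :: "real \<Rightarrow> (real \<Rightarrow> real) \<Rightarrow> 'a::euclidean_space \<Rightarrow> real \<Rightarrow> real \<Rightarrow> 'a" where
  "regularized_control T k a \<epsilon> s = - (k s / (\<epsilon> + gramian T k)) *\<^sub>R a"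

lemma continuous_on_regularized_control:
  "continuous_on {0..T} k \<Longrightarrow> continuous_on {0..T} (regularized_control T k a \<epsilon>)"
  unfolding regularized_control_def divide_inverse by (intro continuous_intros)

lemma regularized_control_miss:
  assumes "continuous_on {0..T} k" and "\<epsilon> + gramian T k \<noteq> 0"
  shows "a + integral {0..T} (\<lambda>s. k s *\<^sub>R regularized_control T k a \<epsilon> s) = (\<epsilon> / (\<epsilon> + gramian T k)) *\<^sub>R a"
proof -
  let ?c = "- (1 / (\<epsilon> + gramian T k)) *\<^sub>R a"
  have "((\<lambda>s. (k s)\<^sup>2) has_integral gramian T k) {0..T}"
    unfolding gramian_def by (intro integrable_integral integrable_continuous_real continuous_intros assms(1))
  then have "((\<lambda>s. (k s)\<^sup>2 *\<^sub>R ?c) has_integral gramian T k *\<^sub>R ?c) {0..T}"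
    by (rule has_integral_scaleR_left)
  moreover have "(\<lambda>s. (k s)\<^sup>2 *\<^sub>R ?c) = (\<lambda>s. k s *\<^sub>R regularized_control T k a \<epsilon> s)"
    unfolding regularized_control_def by (simp add: power2_eq_square)
  ultimately have "integral {0..T} (\<lambda>s. k s *\<^sub>R regularized_control T k a \<epsilon> s)
      = - (gramian T k / (\<epsilon> + gramian T k)) *\<^sub>R a"
    by (simp add: integral_unique)
  moreover have "\<epsilon> / (\<epsilon> + gramian T k) = 1 - gramian T k / (\<epsilon> + gramian T k)"
    using assms(2) by (simp add: field_simps)
  ultimately show ?thesis
    by (simp add: scaleR_diff_left)
qed

lemma control_cost_regularized_add:
  fixes a :: "'a::euclidean_space" and w :: "real \<Rightarrow> 'a"
  assumes "0 < \<gamma>" and ck: "continuous_on {0..T} k" and cw: "continuous_on {0..T} w"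
  defines "u \<equiv> regularized_control T k a (inverse \<gamma>)"
  shows "control_cost T k a \<gamma> (\<lambda>t. u t + w t) = control_cost T k a \<gamma> u
           + integral {0..T} (\<lambda>t. 1/2 * (norm (w t))\<^sup>2) + \<gamma> / 2 * (norm (integral {0..T} (\<lambda>s. k s *\<^sub>R w s)))\<^sup>2"
proof -
  define d where "d = inverse \<gamma> + gramian T k"
  define b where "b = a + integral {0..T} (\<lambda>s. k s *\<^sub>R u s)"
  define I where "I = integral {0..T} (\<lambda>s. k s *\<^sub>R w s)"
  have "0 < d"
    unfolding d_def using gramian_nonneg[OF ck] \<open>0 < \<gamma>\<close> by (simp add: add_pos_nonneg)
  have cu: "continuous_on {0..T} u"
    unfolding u_def by (rule continuous_on_regularized_control[OF ck])
  have b: "b = (inverse \<gamma> / d) *\<^sub>R a"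
    unfolding b_def u_def d_def
    by (rule regularized_control_miss[OF ck]) (use \<open>0 < d\<close> d_def in simp)
  have cross: "integral {0..T} (\<lambda>t. inner (u t) (w t)) = - inner a I / d"
  proof -
    have pointwise: "(\<lambda>t. inner (u t) (w t)) = (\<lambda>t. (- inverse d) *\<^sub>R inner a (k t *\<^sub>R w t))"
      by (simp add: u_def regularized_control_def d_def divide_inverse ac_simps)
    have "integral {0..T} (\<lambda>t. inner a (k t *\<^sub>R w t)) = inner a I"
      unfolding I_def
      using integral_linear[OF _ bounded_linear_inner_right, of "\<lambda>t. k t *\<^sub>R w t" "{0..T}" a]
      by (simp add: o_def integrable_continuous_real continuous_intros ck cw)
    then show ?thesis
      unfolding pointwise integral_cmul by (simp add: divide_inverse)
  qed
  have "integral {0..T} (\<lambda>t. 1/2 * (norm (u t + w t))\<^sup>2)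
      = integral {0..T} (\<lambda>t. 1/2 * (norm (u t))\<^sup>2 + inner (u t) (w t) + 1/2 * (norm (w t))\<^sup>2)"
    by (simp add: power2_norm_eq_inner inner_add_left inner_add_right inner_commute algebra_simps)
  also have "\<dots> = integral {0..T} (\<lambda>t. 1/2 * (norm (u t))\<^sup>2) + integral {0..T} (\<lambda>t. inner (u t) (w t))
      + integral {0..T} (\<lambda>t. 1/2 * (norm (w t))\<^sup>2)"
    by (simp add: integral_add integrable_add integrable_continuous_real continuous_intros cu cw)
  finally have energy: "integral {0..T} (\<lambda>t. 1/2 * (norm (u t + w t))\<^sup>2)
      = integral {0..T} (\<lambda>t. 1/2 * (norm (u t))\<^sup>2) - inner a I / d
      + integral {0..T} (\<lambda>t. 1/2 * (norm (w t))\<^sup>2)"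
    unfolding cross by simp
  have "a + integral {0..T} (\<lambda>s. k s *\<^sub>R (u s + w s)) = b + I"
    unfolding b_def I_def scaleR_add_right
    by (simp add: integral_add integrable_continuous_real continuous_intros ck cu cw)
  moreover have "(norm (b + I))\<^sup>2 = (norm b)\<^sup>2 + 2 * inner b I + (norm I)\<^sup>2"
    by (simp add: power2_norm_eq_inner inner_add_left inner_add_right inner_commute)
  moreover have "\<gamma> * inner b I = inner a I / d" \<comment> \<open>so the cross terms cancel\<close>
    using \<open>0 < \<gamma>\<close> by (simp add: b)
  ultimately have "\<gamma> / 2 * (norm (a + integral {0..T} (\<lambda>s. k s *\<^sub>R (u s + w s))))\<^sup>2
      = \<gamma> / 2 * (norm b)\<^sup>2 + inner a I / d + \<gamma> / 2 * (norm I)\<^sup>2"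
    by (simp add: algebra_simps)
  then show ?thesis
    unfolding control_cost_def energy b_def[symmetric] I_def[symmetric] using \<open>0 < d\<close> by (simp add: field_simps)
qed

lemma regularized_control_unique:
  fixes a :: "'a::euclidean_space" and v :: "real \<Rightarrow> 'a"
  assumes "0 < T" and "0 < \<gamma>" and ck: "continuous_on {0..T} k" and cv: "continuous_on {0..T} v"
    and le: "control_cost T k a \<gamma> v \<le> control_cost T k a \<gamma> (regularized_control T k a (inverse \<gamma>))"
    and t: "t \<in> {0..T}"
  shows "v t = regularized_control T k a (inverse \<gamma>) t"
proof -
  define u where "u = regularized_control T k a (inverse \<gamma>)"
  define w where "w t = v t - u t" for t
  have cw: "continuous_on {0..T} w"
    unfolding w_def u_def by (intro continuous_intros cv continuous_on_regularized_control ck)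
  have "v = (\<lambda>t. u t + w t)"
    unfolding w_def by simp
  then have "control_cost T k a \<gamma> v = control_cost T k a \<gamma> u
      + integral {0..T} (\<lambda>t. 1/2 * (norm (w t))\<^sup>2) + \<gamma> / 2 * (norm (integral {0..T} (\<lambda>s. k s *\<^sub>R w s)))\<^sup>2"
    unfolding u_def using control_cost_regularized_add[OF \<open>0 < \<gamma>\<close> ck cw] by simp
  moreover have "0 \<le> integral {0..T} (\<lambda>t. 1/2 * (norm (w t))\<^sup>2)"
    by (intro integral_nonneg integrable_continuous_real continuous_intros cw) simp
  moreover have "0 \<le> \<gamma> / 2 * (norm (integral {0..T} (\<lambda>s. k s *\<^sub>R w s)))\<^sup>2"
    using \<open>0 < \<gamma>\<close> by simp
  ultimately have "integral {0..T} (\<lambda>t. 1/2 * (norm (w t))\<^sup>2) = 0"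
    using le unfolding u_def by linarith
  then have "\<forall>t\<in>{0..T}. 1/2 * (norm (w t))\<^sup>2 = 0"
    using integral_eq_0_iff[of 0 T "\<lambda>t. 1/2 * (norm (w t))\<^sup>2"] \<open>0 < T\<close>
    by (simp add: continuous_intros cw)
  with t show ?thesis
    unfolding w_def u_def by simp
qed

lemma tendsto_regularized_control:
  assumes "gramian T k \<noteq> 0"
  shows "((\<lambda>\<gamma>. regularized_control T k a (inverse \<gamma>) s) \<longlongrightarrow> regularized_control T k a 0 s) at_top"
  unfolding regularized_control_def
  by (intro tendsto_intros tendsto_inverse_0_at_top filterlim_ident) (use assms in simp)

lemma tendsto_regularized_penalty:
  assumes ck: "continuous_on {0..T} k" and "0 < gramian T k"
  shows "((\<lambda>\<gamma>. \<gamma> / 2 * (norm (a + integral {0..T} (\<lambda>s. k s *\<^sub>R regularized_control T k a (inverse \<gamma>) s)))\<^sup>2)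
           \<longlongrightarrow> 0) at_top"
proof -
  let ?K = "gramian T k"
  have "((\<lambda>\<gamma>. inverse \<gamma> / (2 * (inverse \<gamma> + ?K)\<^sup>2) * (norm a)\<^sup>2) \<longlongrightarrow> 0 / (2 * (0 + ?K)\<^sup>2) * (norm a)\<^sup>2) at_top"
    by (intro tendsto_intros tendsto_inverse_0_at_top filterlim_ident) (use assms in simp)
  then have "((\<lambda>\<gamma>. inverse \<gamma> / (2 * (inverse \<gamma> + ?K)\<^sup>2) * (norm a)\<^sup>2) \<longlongrightarrow> 0) at_top"
    by simp
  moreover have "\<forall>\<^sub>F \<gamma> in at_top. inverse \<gamma> / (2 * (inverse \<gamma> + ?K)\<^sup>2) * (norm a)\<^sup>2
      = \<gamma> / 2 * (norm (a + integral {0..T} (\<lambda>s. k s *\<^sub>R regularized_control T k a (inverse \<gamma>) s)))\<^sup>2"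
    using eventually_gt_at_top[of 0]
  proof eventually_elim
    case (elim \<gamma>)
    then have "0 < inverse \<gamma> + ?K"
      using assms(2) by (simp add: add_pos_pos)
    with elim show ?case
      by (simp add: regularized_control_miss[OF ck] power2_eq_square field_simps)
  qed
  ultimately show ?thesis
    by (rule Lim_transform_eventually)
qed

lemma control_cost_exact:
  assumes "continuous_on {0..T} k" and "gramian T k \<noteq> 0"
  shows "control_cost T k a \<gamma> (regularized_control T k a 0)
           = integral {0..T} (\<lambda>t. 1/2 * (norm (regularized_control T k a 0 t))\<^sup>2)"
  using regularized_control_miss[OF assms(1), of 0 a] assms(2)
  unfolding control_cost_def by simp

locale terminal_penalty_problem =
  fixes T :: real and f h g :: "real \<Rightarrow> real" and m x0 xT :: "real^'d"
  assumes T_pos: "0 < T"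
    and continuous_f: "continuous_on {0..T} f" and continuous_h: "continuous_on {0..T} h"
    and continuous_g: "continuous_on {0..T} g"
    and g_nonzero: "\<exists>t\<in>{0..T}. g t \<noteq> 0"
begin

abbreviation kernel :: "real \<Rightarrow> real" where
  "kernel \<equiv> terminal_kernel T f g"

abbreviation free_miss :: "real^'d" where
  "free_miss \<equiv> terminal_state T f h g m x0 (\<lambda>_. 0) - xT"

lemma continuous_kernel: "continuous_on {0..T} kernel"
  using continuous_f continuous_g by (rule continuous_on_terminal_kernel)

lemma gramian_kernel_pos: "0 < gramian T kernel"
  using g_nonzero gramian_pos[OF T_pos continuous_kernel] unfolding terminal_kernel_def by auto

lemma terminal_miss_eq:
  assumes "continuous_on {0..T} v"
  shows "terminal_state T f h g m x0 v - xT = free_miss + integral {0..T} (\<lambda>s. kernel s *\<^sub>R v s)"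
proof -
  have "terminal_state T f h g m x0 v = terminal_state T f h g m x0 (\<lambda>_. 0) + integral {0..T} (\<lambda>s. kernel s *\<^sub>R v s)"
    using T_pos by (intro terminal_state_affine continuous_f continuous_h continuous_g assms) simp
  then show ?thesis
    by (simp add: algebra_simps)
qed

lemma cost_eq_control_cost:
  "continuous_on {0..T} v \<Longrightarrow> cost T f h g m x0 xT v \<gamma> = control_cost T kernel free_miss \<gamma> v"
  unfolding cost_def control_cost_def by (subst terminal_miss_eq) auto

lemma optimal_control_eq_regularized:
  assumes "0 < \<gamma>" and opt: "optimal_control T f h g m x0 xT \<gamma> u" and "t \<in> {0..T}"
  shows "u t = regularized_control T kernel free_miss (inverse \<gamma>) t"
proof -
  have cr: "continuous_on {0..T} (regularized_control T kernel free_miss (inverse \<gamma>))"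
    by (rule continuous_on_regularized_control[OF continuous_kernel])
  have cu: "continuous_on {0..T} u"
    using opt unfolding optimal_control_def admissible_def by blast
  have "cost T f h g m x0 xT u \<gamma> \<le> cost T f h g m x0 xT (regularized_control T kernel free_miss (inverse \<gamma>)) \<gamma>"
    using opt cr unfolding optimal_control_def admissible_def by blast
  then show ?thesis
    unfolding cost_eq_control_cost[OF cu] cost_eq_control_cost[OF cr]
    by (rule regularized_control_unique[OF T_pos \<open>0 < \<gamma>\<close> continuous_kernel cu _ \<open>t \<in> {0..T}\<close>])
qed

lemma optimal_cost_le_exact:
  assumes "optimal_control T f h g m x0 xT \<gamma> u"
  shows "cost T f h g m x0 xT u \<gamma>
           \<le> integral {0..T} (\<lambda>t. 1/2 * (norm (regularized_control T kernel free_miss 0 t))\<^sup>2)"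
proof -
  have c0: "continuous_on {0..T} (regularized_control T kernel free_miss 0)"
    by (rule continuous_on_regularized_control[OF continuous_kernel])
  then have "cost T f h g m x0 xT u \<gamma> \<le> cost T f h g m x0 xT (regularized_control T kernel free_miss 0) \<gamma>"
    using assms unfolding optimal_control_def admissible_def by blast
  also have "\<dots> = control_cost T kernel free_miss \<gamma> (regularized_control T kernel free_miss 0)"
    by (rule cost_eq_control_cost[OF c0])
  also have "\<dots> = integral {0..T} (\<lambda>t. 1/2 * (norm (regularized_control T kernel free_miss 0 t))\<^sup>2)"
    using gramian_kernel_pos by (intro control_cost_exact continuous_kernel) simp
  finally show ?thesis .
qed

context
  fixes ustar :: "real \<Rightarrow> real \<Rightarrow> real^'d"
  assumes optimal: "\<And>\<gamma>. 0 < \<gamma> \<Longrightarrow> optimal_control T f h g m x0 xT \<gamma> (ustar \<gamma>)"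
begin

lemma tendsto_optimal_control:
  assumes "t \<in> {0..T}"
  shows "((\<lambda>\<gamma>. ustar \<gamma> t) \<longlongrightarrow> regularized_control T kernel free_miss 0 t) at_top"
proof -
  have "gramian T kernel \<noteq> 0"
    using gramian_kernel_pos by simp
  then have "((\<lambda>\<gamma>. regularized_control T kernel free_miss (inverse \<gamma>) t)
      \<longlongrightarrow> regularized_control T kernel free_miss 0 t) at_top"
    by (rule tendsto_regularized_control)
  moreover have "\<forall>\<^sub>F \<gamma> in at_top. regularized_control T kernel free_miss (inverse \<gamma>) t = ustar \<gamma> t"
    using eventually_gt_at_top[of 0]
    by eventually_elim (rule optimal_control_eq_regularized[OF _ optimal assms, symmetric])
  ultimately show ?thesis
    by (rule Lim_transform_eventually)
qed

lemma tendsto_optimal_penalty: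
  "((\<lambda>\<gamma>. \<gamma> / 2 * (norm (terminal_state T f h g m x0 (ustar \<gamma>) - xT))\<^sup>2) \<longlongrightarrow> 0) at_top"
proof -
  have "\<forall>\<^sub>F \<gamma> in at_top.
      \<gamma> / 2 * (norm (free_miss + integral {0..T} (\<lambda>s. kernel s *\<^sub>R regularized_control T kernel free_miss (inverse \<gamma>) s)))\<^sup>2
      = \<gamma> / 2 * (norm (terminal_state T f h g m x0 (ustar \<gamma>) - xT))\<^sup>2"
    using eventually_gt_at_top[of 0]
  proof eventually_elim
    case (elim \<gamma>)
    have "continuous_on {0..T} (ustar \<gamma>)"
      using optimal[OF elim] unfolding optimal_control_def admissible_def by blast
    moreover have "integral {0..T} (\<lambda>s. kernel s *\<^sub>R ustar \<gamma> s)
        = integral {0..T} (\<lambda>s. kernel s *\<^sub>R regularized_control T kernel free_miss (inverse \<gamma>) s)"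
      using optimal_control_eq_regularized[OF elim optimal[OF elim]] by (intro integral_cong) simp
    ultimately show ?case
      by (simp only: terminal_miss_eq)
  qed
  with tendsto_regularized_penalty[OF continuous_kernel gramian_kernel_pos] show ?thesis
    by (rule Lim_transform_eventually)
qed

end

end

theorem proposition4p3:
  fixes T :: real and f h g :: "real \<Rightarrow> real"
    and m x0 xT :: "real^'d"
    and ustar :: "real \<Rightarrow> real \<Rightarrow> real^'d"
  assumes "T > 0"
    and "continuous_on {0..T} f" and "continuous_on {0..T} h" and "continuous_on {0..T} g"
    and "\<exists>t\<in>{0..T}. g t \<noteq> 0"
    and "\<And>\<gamma>. \<gamma> > 0 \<Longrightarrow> optimal_control T f h g m x0 xT \<gamma> (ustar \<gamma>)"
  shows "\<exists>uinf L.
           (\<forall>t\<in>{0..T}. ((\<lambda>\<gamma>. ustar \<gamma> t) \<longlongrightarrow> uinf t) at_top)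
         \<and> ((\<lambda>\<gamma>. \<gamma> / 2 * (norm (terminal_state T f h g m x0 (ustar \<gamma>) - xT))\<^sup>2) \<longlongrightarrow> L) at_top
         \<and> (\<forall>\<gamma>>0. cost T f h g m x0 xT (ustar \<gamma>) \<gamma>
                    \<le> integral {0..T} (\<lambda>t. 1/2 * (norm (uinf t))\<^sup>2) + L)"
proof -
  interpret terminal_penalty_problem T f h g m x0 xT
    using assms(1-5) by unfold_locales
  show ?thesis
    using tendsto_optimal_control[OF assms(6)] tendsto_optimal_penalty[OF assms(6)]
      optimal_cost_le_exact[OF assms(6)]
    by (intro exI[of _ "regularized_control T kernel free_miss 0"] exI[of _ 0]) simp
qed

end
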